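(* Let $R$ be an integral domain with fraction field $K$ and $\mathcal O$ a valuation ring of $K$ such that the structure $(K;R,\mathcal O)$ (the field $K$ in the language of rings with unary predicates for $R$ and $\mathcal O$) is dp-minimal. Then $R\subseteq\mathcal O$ or $\mathcal O\subseteq R$. In particular this holds when $R$ is a dp-minimal domain and $\mathcal O$ is an externally definable valuation ring of $K$ in $(K;R)$.
   Context: Rings are commutative with identity; dp-minimal means the theory has dp-rank $1$. Externally definable: the trace on $K$ of a set definable with parameters in an elementary extension. *)

theory Defs
  imports Main
begin

datatype tm = Var nat | Zero | One | Add tm tm | Neg tm | Mul tm tm

datatype fm = Eq tm tm | Pred nat tm | Neg_fm fm | Conj fm fm | Ex nat fm

fun evt :: "(nat \<Rightarrow> 'a::comm_ring_1) \<Rightarrow> tm \<Rightarrow> 'a" where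
  "evt e (Var v) = e v"
| "evt e Zero = 0"
| "evt e One = 1"
| "evt e (Add s t) = evt e s + evt e t"
| "evt e (Neg t) = - evt e t"
| "evt e (Mul s t) = evt e s * evt e t"

text \<open>Satisfaction in the structure with universe U (closed under the ring operations
  of the ambient type), and unary predicates given by the list ps
  (Pred i refers to the i-th predicate; out-of-range indices are interpreted as false).\<close>
fun sat :: "'a::comm_ring_1 set \<Rightarrow> 'a set list \<Rightarrow> (nat \<Rightarrow> 'a) \<Rightarrow> fm \<Rightarrow> bool" where
  "sat U ps e (Eq s t) = (evt e s = evt e t)"
| "sat U ps e (Pred i t) = (i < length ps \<and> evt e t \<in> ps ! i)"
| "sat U ps e (Neg_fm f) = (\<not> sat U ps e f)"
| "sat U ps e (Conj f g) = (sat U ps e f \<and> sat U ps e g)"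
| "sat U ps e (Ex v f) = (\<exists>a\<in>U. sat U ps (e(v := a)) f)"

definition assignment_in :: "'a set \<Rightarrow> (nat \<Rightarrow> 'a) \<Rightarrow> bool" where
  "assignment_in U e \<longleftrightarrow> (\<forall>v. e v \<in> U)"

text \<open>Finite ict-pattern of depth 2 and length n in the single object variable 0:
  formulas phi(x; y), psi(x; z) (x = variable 0, the parameters are the other variables),
  parameter assignments b_0..b_{n-1}, c_0..c_{n-1} and witnesses a_ij with
  phi(a_ij, b_k) iff k = i and psi(a_ij, c_l) iff l = j.\<close>
definition ict2_pattern :: "'a::comm_ring_1 set \<Rightarrow> 'a set list \<Rightarrow> fm \<Rightarrow> fm \<Rightarrow> nat \<Rightarrow> bool" where
  "ict2_pattern U ps \<phi> \<psi> n \<longleftrightarrow>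
     (\<exists>b c :: nat \<Rightarrow> nat \<Rightarrow> 'a. \<exists>a :: nat \<Rightarrow> nat \<Rightarrow> 'a.
        (\<forall>k<n. assignment_in U (b k) \<and> assignment_in U (c k)) \<and>
        (\<forall>i<n. \<forall>j<n. a i j \<in> U \<and>
           (\<forall>k<n. sat U ps ((b k)(0 := a i j)) \<phi> \<longleftrightarrow> k = i) \<and>
           (\<forall>l<n. sat U ps ((c l)(0 := a i j)) \<psi> \<longleftrightarrow> l = j)))"

text \<open>dp-minimality: no ict-pattern of depth 2 in a single variable in a monster model
  of the theory; by compactness, equivalently, for every pair of formulas
  the finite patterns have bounded length in the structure itself.\<close>
definition dp_minimal :: "'a::comm_ring_1 set \<Rightarrow> 'a set list \<Rightarrow> bool" where
  "dp_minimal U ps \<longleftrightarrow> (\<forall>\<phi> \<psi>. \<exists>n. \<not> ict2_pattern U ps \<phi> \<psi> n)"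

text \<open>Externally definable subsets: traces on U of sets definable with parameters in an
  elementary extension; by compactness, equivalently X \<subseteq> U and some phi(x;y) such
  that every finite piece of X is cut out by an instance of phi with parameters in U.\<close>
definition externally_definable :: "'a::comm_ring_1 set \<Rightarrow> 'a set list \<Rightarrow> 'a set \<Rightarrow> bool" where
  "externally_definable U ps X \<longleftrightarrow> X \<subseteq> U \<and>
     (\<exists>\<phi>. \<forall>A. finite A \<and> A \<subseteq> U \<longrightarrow>
        (\<exists>e. assignment_in U e \<and> (\<forall>x\<in>A. x \<in> X \<longleftrightarrow> sat U ps (e(0 := x)) \<phi>)))"

definition subring_of :: "'a::field set \<Rightarrow> bool" where
  "subring_of R \<longleftrightarrow> 0 \<in> R \<and> 1 \<in> R \<and> (\<forall>x\<in>R. \<forall>y\<in>R. x + y \<in> R \<and> - x \<in> R \<and> x * y \<in> R)"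

definition fraction_field_of :: "'a::field set \<Rightarrow> bool" where
  "fraction_field_of R \<longleftrightarrow> subring_of R \<and> (\<forall>x. \<exists>r\<in>R. \<exists>s\<in>R. s \<noteq> 0 \<and> x = r / s)"

definition valuation_ring :: "'a::field set \<Rightarrow> bool" where
  "valuation_ring V \<longleftrightarrow> subring_of V \<and> (\<forall>x. x \<noteq> 0 \<longrightarrow> x \<in> V \<or> inverse x \<in> V)"

end

theory Submission
  imports Defs "HOL-Library.FuncSet"
begin

text \<open>Suppose a \<in> R - O and b \<in> O - R.  The powers a^j are pairwise incongruent
  modulo O, and O contains arbitrarily long sequences \<alpha>_i that are pairwise incongruent
  modulo R (otherwise O would be covered by finitely many translates of R, which the
  presence of a rules out).  The elements \<alpha>_i + a^j then witness ict-patterns of depth 2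
  and arbitrary length for the formulas x - y \<in> R and x - z \<in> O, contradicting
  dp-minimality.  For the second statement the pattern is transported into the ring R:
  (K; R) is interpreted in R by fractions, O is cut out on the finitely many relevant points
  by an instance of a formula of (K; R), and a common denominator D of the \<alpha>_i moves the
  witnesses into R.\<close>

lemma
  assumes "subring_of R"
  shows subring_zero: "0 \<in> R" and subring_one: "1 \<in> R"
    and subring_add: "x \<in> R \<Longrightarrow> y \<in> R \<Longrightarrow> x + y \<in> R"
    and subring_uminus: "x \<in> R \<Longrightarrow> - x \<in> R"
    and subring_mult: "x \<in> R \<Longrightarrow> y \<in> R \<Longrightarrow> x * y \<in> R"
  using assms by (auto simp: subring_of_def)

lemma subring_diff: "subring_of R \<Longrightarrow> x \<in> R \<Longrightarrow> y \<in> R \<Longrightarrow> x - y \<in> R"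
  using subring_add subring_uminus by (metis diff_conv_add_uminus)

lemma subring_power: "subring_of R \<Longrightarrow> x \<in> R \<Longrightarrow> x ^ n \<in> R"
  by (induction n) (auto intro: subring_one subring_mult)

lemma subring_minus_commute: "subring_of R \<Longrightarrow> x - y \<in> R \<longleftrightarrow> y - x \<in> R"
  by (metis minus_diff_eq subring_uminus)

lemma valuation_ring_subring: "valuation_ring V \<Longrightarrow> subring_of V"
  by (simp add: valuation_ring_def)

lemma valuation_ring_inverse: "valuation_ring V \<Longrightarrow> x \<notin> V \<Longrightarrow> inverse x \<in> V"
  unfolding valuation_ring_def subring_of_def by (cases "x = 0") auto

lemma valuation_ring_mult_notin:
  assumes V: "valuation_ring V" and "x \<notin> V" "y \<notin> V"
  shows "x * y \<notin> V"
proof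
  assume "x * y \<in> V"
  then have "x * y * inverse y \<in> V"
    using assms valuation_ring_inverse subring_mult valuation_ring_subring by blast
  moreover have "y \<noteq> 0"
    using assms subring_zero valuation_ring_subring by blast
  ultimately show False
    using \<open>x \<notin> V\<close> by (simp add: mult.assoc)
qed

lemma valuation_ring_power_notin:
  "valuation_ring V \<Longrightarrow> x \<notin> V \<Longrightarrow> n \<noteq> 0 \<Longrightarrow> x ^ n \<notin> V"
proof (induction n)
  case (Suc n)
  then show ?case
    using valuation_ring_mult_notin[of V x "x ^ n"] by (cases "n = 0") auto
qed simp

text \<open>If v(y) < 0 then 1 - 1/y is a unit of V: its inverse is y/(y - 1) = 1 + 1/(y - 1),
  and v(y - 1) = v(y) < 0.\<close>
lemma valuation_ring_one_minus_inverse: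
  assumes V: "valuation_ring V" and y: "y \<notin> V"
  shows "1 - inverse y \<noteq> 0" and "inverse (1 - inverse y) \<in> V"
proof -
  have S: "subring_of V"
    using V by (rule valuation_ring_subring)
  have "y \<noteq> 0" "y \<noteq> 1"
    using y subring_zero[OF S] subring_one[OF S] by auto
  then show "1 - inverse y \<noteq> 0"
    by (simp add: field_simps)
  have "y - 1 \<notin> V"
    using y subring_add[OF S _ subring_one[OF S], of "y - 1"] by auto
  then have "1 + inverse (y - 1) \<in> V"
    using S V valuation_ring_inverse subring_add subring_one by blast
  moreover have "inverse (1 - inverse y) = 1 + inverse (y - 1)"
    using \<open>y \<noteq> 0\<close> \<open>y \<noteq> 1\<close> by (simp add: field_simps)
  ultimately show "inverse (1 - inverse y) \<in> V"
    by simp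
qed

definition pairwise_incongruent :: "'a::ab_group_add set \<Rightarrow> nat \<Rightarrow> (nat \<Rightarrow> 'a) \<Rightarrow> bool" where
  "pairwise_incongruent S n \<alpha> \<longleftrightarrow> (\<forall>i<n. \<forall>k<n. i \<noteq> k \<longrightarrow> \<alpha> i - \<alpha> k \<notin> S)"

lemma pairwise_incongruent_powers:
  assumes V: "valuation_ring V" and a: "a \<notin> V"
  shows "pairwise_incongruent V n (\<lambda>j. a ^ j)"
proof -
  have "a ^ j - a ^ l \<notin> V" if "l < j" for j l
  proof
    let ?u = "1 - inverse (a ^ (j - l))"
    assume "a ^ j - a ^ l \<in> V"
    moreover have "inverse ?u \<in> V" "?u \<noteq> 0"
      using valuation_ring_one_minus_inverse[OF V valuation_ring_power_notin[OF V a]] that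
      by auto
    moreover have "a \<noteq> 0"
      using a V subring_zero valuation_ring_subring by blast
    then have "a ^ j - a ^ l = a ^ j * ?u"
      using that by (simp add: right_diff_distrib power_diff)
    ultimately have "a ^ j \<in> V"
      using subring_mult[OF valuation_ring_subring[OF V]]
      by (metis nonzero_mult_div_cancel_right divide_inverse)
    then show False
      using valuation_ring_power_notin[OF V a] that by simp
  qed
  then show ?thesis
    unfolding pairwise_incongruent_def
    by (metis linorder_neq_iff subring_minus_commute valuation_ring_subring[OF V])
qed

lemma pigeonhole_nat:
  assumes "finite A" and "\<And>m. f m \<in> A"
  obtains i j :: nat where "i < j" and "f i = f j"
proof -
  have "\<not> inj f"
    using assms finite_imageD[of f UNIV] finite_subset[of "range f" A] by auto
  then obtain i j where "f i = f j" "i \<noteq> j"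
    by (auto simp: inj_def)
  then show thesis
    using that by (metis linorder_neq_iff)
qed

text \<open>The residue maps f \<mapsto> f t^m mod R on F \<union> {1} take only finitely many values,
  so two exponents i < j give the same map.\<close>
lemma finite_cover_power_diff_conductor:
  assumes R: "subring_of R" and S: "subring_of V" and t: "t \<in> V"
    and F: "finite F" "F \<subseteq> V" and cover: "\<And>z. z \<in> V \<Longrightarrow> \<exists>f\<in>F. z - f \<in> R"
  obtains i j where "i < j" and "\<And>z. z \<in> V \<Longrightarrow> z * (t ^ i - t ^ j) \<in> R"
proof -
  define F' where "F' = insert 1 F"
  have "\<exists>G \<in> F' \<rightarrow>\<^sub>E F'. \<forall>f\<in>F'. f * t ^ m - G f \<in> R" for m
  proof -
    have "\<exists>g\<in>F'. f * t ^ m - g \<in> R" if "f \<in> F'" for f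
      using cover[of "f * t ^ m"] that F(2) subring_one[OF S] subring_mult[OF S]
        subring_power[OF S t] by (auto simp: F'_def)
    then obtain G where "\<forall>f\<in>F'. G f \<in> F' \<and> f * t ^ m - G f \<in> R"
      by metis
    then show ?thesis
      by (intro bexI[of _ "restrict G F'"]) auto
  qed
  then obtain G where G: "\<And>m. G m \<in> F' \<rightarrow>\<^sub>E F'"
    and G_residue: "\<And>m f. f \<in> F' \<Longrightarrow> f * t ^ m - G m f \<in> R"
    by metis
  obtain i j where "i < j" and "G i = G j"
    using pigeonhole_nat[OF finite_PiE, of F' "\<lambda>_. F'" G] G F(1) by (auto simp: F'_def)
  have F'_mult: "f * (t ^ i - t ^ j) \<in> R" if "f \<in> F'" for f
  proof -
    have "(f * t ^ i - G i f) - (f * t ^ j - G j f) \<in> R"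
      using G_residue[OF that] subring_diff[OF R] by blast
    then show ?thesis
      by (simp add: \<open>G i = G j\<close> right_diff_distrib)
  qed
  have "z * (t ^ i - t ^ j) \<in> R" if z: "z \<in> V" for z
  proof -
    obtain f where "f \<in> F" "z - f \<in> R"
      using cover[OF z] by blast
    moreover have "z * (t ^ i - t ^ j) = f * (t ^ i - t ^ j) + (z - f) * (t ^ i - t ^ j)"
      by (simp add: algebra_simps)
    ultimately show ?thesis
      using F'_mult[of 1] F'_mult[of f] subring_add[OF R] subring_mult[OF R]
      by (simp add: F'_def)
  qed
  with \<open>i < j\<close> show thesis
    using that by blast
qed

lemma finite_cover_imp_subset:
  assumes R: "subring_of R" and V: "valuation_ring V" and a: "a \<in> R" "a \<notin> V"
    and F: "finite F" "F \<subseteq> V" and cover: "\<And>z. z \<in> V \<Longrightarrow> \<exists>f\<in>F. z - f \<in> R"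
  shows "V \<subseteq> R"
proof
  fix b assume b: "b \<in> V"
  have S: "subring_of V"
    using V by (rule valuation_ring_subring)
  obtain i j where "i < j" and conductor: "\<And>z. z \<in> V \<Longrightarrow> z * (inverse a ^ i - inverse a ^ j) \<in> R"
    using finite_cover_power_diff_conductor[OF R S valuation_ring_inverse[OF V a(2)] F cover]
    by blast
  define u where "u = 1 - inverse (a ^ (j - i))"
  have "u \<noteq> 0" and "inverse u \<in> V"
    unfolding u_def
    using valuation_ring_one_minus_inverse[OF V valuation_ring_power_notin[OF V a(2)]] \<open>i < j\<close>
    by auto
  have "a \<noteq> 0"
    using a(2) subring_zero[OF S] by blast
  then have "a ^ i * (inverse a ^ i - inverse a ^ j) = u"
    using \<open>i < j\<close> by (simp add: u_def right_diff_distrib power_diff power_inverse field_simps)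
  then have "b = a ^ i * ((b * inverse u) * (inverse a ^ i - inverse a ^ j))"
    using \<open>u \<noteq> 0\<close> by (metis mult.assoc mult.commute nonzero_divide_eq_eq divide_inverse)
  moreover have "(b * inverse u) * (inverse a ^ i - inverse a ^ j) \<in> R"
    using conductor subring_mult[OF S b \<open>inverse u \<in> V\<close>] by blast
  ultimately show "b \<in> R"
    using subring_mult[OF R subring_power[OF R a(1)]] by metis
qed

lemma pairwise_incongruent_or_finite_cover:
  assumes R: "subring_of R"
  shows "(\<exists>\<alpha>. (\<forall>i<n. \<alpha> i \<in> V) \<and> pairwise_incongruent R n \<alpha>) \<or>
    (\<exists>F. finite F \<and> F \<subseteq> V \<and> (\<forall>z\<in>V. \<exists>f\<in>F. z - f \<in> R))"
proof (induction n)
  case 0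
  then show ?case
    by (simp add: pairwise_incongruent_def)
next
  case (Suc n)
  show ?case
  proof (cases "\<exists>F. finite F \<and> F \<subseteq> V \<and> (\<forall>z\<in>V. \<exists>f\<in>F. z - f \<in> R)")
    case False
    then obtain \<alpha> where \<alpha>: "\<forall>i<n. \<alpha> i \<in> V" "pairwise_incongruent R n \<alpha>"
      using Suc.IH by blast
    then obtain z where "z \<in> V" and z: "\<forall>i<n. z - \<alpha> i \<notin> R"
      using False[simplified, rule_format, of "\<alpha> ` {..<n}"] by auto
    then have "\<forall>i<Suc n. (\<alpha>(n := z)) i \<in> V" and "pairwise_incongruent R (Suc n) (\<alpha>(n := z))"
      using \<alpha> subring_minus_commute[OF R] by (auto simp: pairwise_incongruent_def less_Suc_eq)
    then show ?thesis
      by blast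
  qed blast
qed

lemma pairwise_incongruent_exists:
  assumes R: "subring_of R" and V: "valuation_ring V"
    and "a \<in> R" "a \<notin> V" and "b \<in> V" "b \<notin> R"
  obtains \<alpha> where "\<forall>i<n. \<alpha> i \<in> V" and "pairwise_incongruent R n \<alpha>"
  using pairwise_incongruent_or_finite_cover[OF R, of n V] finite_cover_imp_subset[OF R V] assms
  by blast

lemma grid_membership:
  assumes R: "subring_of R" and V: "subring_of V"
    and \<alpha>: "\<forall>i<n. \<alpha> i \<in> V" "pairwise_incongruent R n \<alpha>"
    and \<beta>: "\<forall>j<n. \<beta> j \<in> R" "pairwise_incongruent V n \<beta>"
    and "i < n" "j < n" "k < n"
  shows "\<alpha> i + \<beta> j - \<alpha> k \<in> R \<longleftrightarrow> k = i"
    and "\<alpha> i + \<beta> j - \<beta> k \<in> V \<longleftrightarrow> k = j"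
proof -
  have "\<alpha> i + \<beta> j - \<alpha> k \<in> R \<longleftrightarrow> \<alpha> i - \<alpha> k \<in> R"
    using subring_add[OF R _ \<beta>(1)[rule_format, OF \<open>j < n\<close>], of "\<alpha> i - \<alpha> k"]
      subring_diff[OF R _ \<beta>(1)[rule_format, OF \<open>j < n\<close>], of "\<alpha> i + \<beta> j - \<alpha> k"]
    by (auto simp: algebra_simps)
  then show "\<alpha> i + \<beta> j - \<alpha> k \<in> R \<longleftrightarrow> k = i"
    using \<alpha>(2) assms(7-9) subring_zero[OF R] by (auto simp: pairwise_incongruent_def)
  have "\<alpha> i + \<beta> j - \<beta> k \<in> V \<longleftrightarrow> \<beta> j - \<beta> k \<in> V"
    using subring_add[OF V \<alpha>(1)[rule_format, OF \<open>i < n\<close>], of "\<beta> j - \<beta> k"]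
      subring_diff[OF V _ \<alpha>(1)[rule_format, OF \<open>i < n\<close>], of "\<alpha> i + \<beta> j - \<beta> k"]
    by (auto simp: algebra_simps)
  then show "\<alpha> i + \<beta> j - \<beta> k \<in> V \<longleftrightarrow> k = j"
    using \<beta>(2) assms(7-9) subring_zero[OF V] by (auto simp: pairwise_incongruent_def)
qed

lemma dp_minimal_imp_comparable:
  assumes R: "subring_of R" and V: "valuation_ring V" and dp: "dp_minimal UNIV [R, V]"
  shows "R \<subseteq> V \<or> V \<subseteq> R"
proof (rule ccontr)
  assume "\<not> (R \<subseteq> V \<or> V \<subseteq> R)"
  then obtain a b where ab: "a \<in> R" "a \<notin> V" "b \<in> V" "b \<notin> R"
    by blast
  define \<phi> where "\<phi> = Pred 0 (Add (Var 0) (Neg (Var 1)))"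
  define \<psi> where "\<psi> = Pred 1 (Add (Var 0) (Neg (Var 1)))"
  obtain n where no_pattern: "\<not> ict2_pattern UNIV [R, V] \<phi> \<psi> n"
    using dp unfolding dp_minimal_def by blast
  obtain \<alpha> where \<alpha>: "\<forall>i<n. \<alpha> i \<in> V" "pairwise_incongruent R n \<alpha>"
    using pairwise_incongruent_exists[OF R V ab] by blast
  have "\<forall>j<n. a ^ j \<in> R"
    using subring_power[OF R ab(1)] by blast
  note grid = grid_membership[OF R valuation_ring_subring[OF V] \<alpha> this
      pairwise_incongruent_powers[OF V ab(2)]]
  have "ict2_pattern UNIV [R, V] \<phi> \<psi> n"
    unfolding ict2_pattern_def assignment_in_def
    by (rule exI[of _ "\<lambda>k _. \<alpha> k"], rule exI[of _ "\<lambda>l _. a ^ l"],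
        rule exI[of _ "\<lambda>i j. \<alpha> i + a ^ j"])
      (simp add: \<phi>_def \<psi>_def grid)
  with no_pattern show False ..
qed

text \<open>K is interpreted in R by fractions: the K-variable v becomes the pair of R-variables
  2v + 3 (numerator) and 2v + 4 (denominator).  Variable 1 is the bound witness in the
  translation of the predicate R; variables 0 and 2 stay free for the pattern formulas.\<close>

fun frac_tm :: "tm \<Rightarrow> tm \<times> tm" where
  "frac_tm (Var v) = (Var (2 * v + 3), Var (2 * v + 4))"
| "frac_tm Zero = (Zero, One)"
| "frac_tm One = (One, One)"
| "frac_tm (Add s t) =
    (Add (Mul (fst (frac_tm s)) (snd (frac_tm t))) (Mul (fst (frac_tm t)) (snd (frac_tm s))),
     Mul (snd (frac_tm s)) (snd (frac_tm t)))"
| "frac_tm (Neg t) = (Neg (fst (frac_tm t)), snd (frac_tm t))"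
| "frac_tm (Mul s t) =
    (Mul (fst (frac_tm s)) (fst (frac_tm t)), Mul (snd (frac_tm s)) (snd (frac_tm t)))"

fun frac_fm :: "fm \<Rightarrow> fm" where
  "frac_fm (Eq s t) =
    Eq (Mul (fst (frac_tm s)) (snd (frac_tm t))) (Mul (fst (frac_tm t)) (snd (frac_tm s)))"
| "frac_fm (Pred i t) =
    (if i = 0 then Ex 1 (Eq (fst (frac_tm t)) (Mul (snd (frac_tm t)) (Var 1)))
     else Neg_fm (Eq Zero Zero))"
| "frac_fm (Neg_fm f) = Neg_fm (frac_fm f)"
| "frac_fm (Conj f g) = Conj (frac_fm f) (frac_fm g)"
| "frac_fm (Ex v f) =
    Ex (2 * v + 3) (Ex (2 * v + 4) (Conj (Neg_fm (Eq (Var (2 * v + 4)) Zero)) (frac_fm f)))"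

definition frac_env :: "(nat \<Rightarrow> 'a::field) \<Rightarrow> nat \<Rightarrow> 'a" where
  "frac_env e v = e (2 * v + 3) / e (2 * v + 4)"

lemma evt_frac_tm:
  fixes e :: "nat \<Rightarrow> 'a::field"
  assumes "\<forall>v. e (2 * v + 4) \<noteq> 0"
  shows "evt e (snd (frac_tm t)) \<noteq> 0 \<and>
    evt e (fst (frac_tm t)) / evt e (snd (frac_tm t)) = evt (frac_env e) t"
  using assms by (induction t)
    (auto simp: frac_env_def minus_divide_left simp flip: add_frac_eq times_divide_times_eq)

lemma frac_env_upd: "frac_env (e(2 * v + 3 := p, 2 * v + 4 := q)) = (frac_env e)(v := p / q)"
  by (auto simp: frac_env_def)

lemma frac_env_upd_reserved: "u < 3 \<Longrightarrow> frac_env (e(u := w)) = frac_env e"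
  by (auto simp: frac_env_def)

lemma sat_frac_fm:
  fixes R :: "'a::field set"
  assumes R: "fraction_field_of R" and "\<forall>v. e (2 * v + 4) \<noteq> 0"
  shows "sat R [] e (frac_fm f) \<longleftrightarrow> sat UNIV [R] (frac_env e) f"
  using assms(2)
proof (induction f arbitrary: e)
  case (Eq s t)
  then show ?case
    using evt_frac_tm[OF Eq.prems, of s] evt_frac_tm[OF Eq.prems, of t] by (simp flip: frac_eq_eq)
next
  case (Pred i t)
  have "evt (e(1 := w)) (fst (frac_tm t)) = evt (e(1 := w)) (snd (frac_tm t)) * w \<longleftrightarrow>
      w = evt (frac_env e) t" for w
  proof -
    have "\<forall>v. (e(1 := w)) (2 * v + 4) \<noteq> 0"
      using Pred.prems by simp
    moreover have "frac_env (e(1 := w)) = frac_env e"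
      by (rule frac_env_upd_reserved) simp
    ultimately obtain n d where "evt (e(1 := w)) (fst (frac_tm t)) = n"
      and "evt (e(1 := w)) (snd (frac_tm t)) = d" and "d \<noteq> 0" and "n / d = evt (frac_env e) t"
      using evt_frac_tm by metis
    then show ?thesis
      by (auto simp: field_simps)
  qed
  then show ?case
    by auto
next
  case (Ex v f)
  have "sat R [] (e(2 * v + 3 := p, 2 * v + 4 := q)) (frac_fm f) \<longleftrightarrow>
      sat UNIV [R] ((frac_env e)(v := p / q)) f" if "q \<noteq> 0" for p q
  proof -
    have "\<forall>w. (e(2 * v + 3 := p, 2 * v + 4 := q)) (2 * w + 4) \<noteq> 0"
      using that Ex.prems by (auto simp: fun_upd_def)
    then show ?thesis
      using Ex.IH frac_env_upd by metis
  qed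
  then have "sat R [] e (frac_fm (Ex v f)) \<longleftrightarrow>
      (\<exists>p\<in>R. \<exists>q\<in>R. q \<noteq> 0 \<and> sat UNIV [R] ((frac_env e)(v := p / q)) f)"
    by auto
  also have "\<dots> \<longleftrightarrow> (\<exists>y. sat UNIV [R] ((frac_env e)(v := y)) f)"
    using R unfolding fraction_field_of_def by metis
  finally show ?case
    by simp
qed simp_all

lemma frac_env_surj:
  fixes R :: "'a::field set"
  assumes "fraction_field_of R"
  obtains E where "assignment_in R E" and "\<forall>v. E (2 * v + 4) \<noteq> 0" and "frac_env E = e"
proof -
  have "\<forall>v. \<exists>p. fst p \<in> R \<and> snd p \<in> R \<and> snd p \<noteq> 0 \<and> e v = fst p / snd p"
    using assms unfolding fraction_field_of_def by force
  then obtain p where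
    p: "\<forall>v. fst (p v) \<in> R \<and> snd (p v) \<in> R \<and> snd (p v) \<noteq> 0 \<and> e v = fst (p v) / snd (p v)"
    by (rule exE[OF choice])
  define E where "E u = (if odd u then fst (p ((u - 3) div 2)) else snd (p ((u - 4) div 2)))" for u
  have "assignment_in R E"
    by (simp add: assignment_in_def E_def p)
  moreover have "\<forall>v. E (2 * v + 4) \<noteq> 0"
    by (simp add: E_def p)
  moreover have "frac_env E = e"
    by (auto simp: frac_env_def E_def p)
  ultimately show thesis
    using that by blast
qed

lemma fraction_field_common_denominator:
  fixes R :: "'a::field set"
  assumes R: "fraction_field_of R" and "finite A"
  obtains D where "D \<in> R" and "D \<noteq> 0" and "\<forall>x\<in>A. D * x \<in> R"
proof -
  have S: "subring_of R"
    using R by (simp add: fraction_field_of_def)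
  have "\<exists>D\<in>R. D \<noteq> 0 \<and> (\<forall>x\<in>A. D * x \<in> R)"
    using \<open>finite A\<close>
  proof (induction A rule: finite_induct)
    case empty
    show ?case
      using subring_one[OF S] by (intro bexI[of _ 1]) auto
  next
    case (insert x A)
    then obtain D where D: "D \<in> R" "D \<noteq> 0" "\<forall>y\<in>A. D * y \<in> R"
      by blast
    obtain r s where "r \<in> R" "s \<in> R" "s \<noteq> 0" "x = r / s"
      using R unfolding fraction_field_of_def by blast
    then have "D * s \<in> R" "D * s \<noteq> 0" "D * s * x \<in> R"
      using D subring_mult[OF S] by auto
    moreover have "D * s * y \<in> R" if "y \<in> A" for y
      using subring_mult[OF S \<open>s \<in> R\<close> D(3)[rule_format, OF that]] by (simp add: ac_simps)
    ultimately show ?case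
      by blast
  qed
  then show thesis
    using that by blast
qed

definition dvd_diff_fm :: fm where
  "dvd_diff_fm = Ex 1 (Eq (Add (Var 0) (Neg (Var 2))) (Mul (Var 3) (Var 1)))"

lemma sat_dvd_diff_fm:
  fixes R :: "'a::field set"
  assumes "D \<noteq> 0"
  shows "sat R [] (((\<lambda>_. 0)(2 := D * y, 3 := D))(0 := D * x)) dvd_diff_fm \<longleftrightarrow> x - y \<in> R"
proof -
  have "D * x + - (D * y) = D * w \<longleftrightarrow> w = x - y" for w
    using assms by (auto simp flip: right_diff_distrib)
  then show ?thesis
    by (simp add: dvd_diff_fm_def)
qed

text \<open>Read in R with x at variable 0, D * y at variable 2 and D at variable 4, this formula
  says that \<phi> holds in (K; R) at x - y, the other variables of \<phi> being read as fractions.\<close>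
definition shifted_frac_fm :: "fm \<Rightarrow> fm" where
  "shifted_frac_fm \<phi> = Ex 3 (Conj (Eq (Var 3) (Add (Var 0) (Neg (Var 2)))) (frac_fm \<phi>))"

lemma sat_shifted_frac_fm:
  fixes R :: "'a::field set"
  assumes R: "fraction_field_of R" and E: "\<forall>v. E (2 * v + 4) \<noteq> 0"
    and D: "D \<noteq> 0" and "D * x \<in> R" and "D * y \<in> R"
  shows "sat R [] ((E(2 := D * y, 4 := D))(0 := D * x)) (shifted_frac_fm \<phi>) \<longleftrightarrow>
    sat UNIV [R] ((frac_env E)(0 := x - y)) \<phi>"
proof -
  define env where "env = E(2 := D * y, 4 := D, 0 := D * x, 3 := D * (x - y))"
  have "D * (x - y) \<in> R"
    using subring_diff[OF _ assms(4,5)] R by (simp add: fraction_field_of_def right_diff_distrib)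
  then have "sat R [] ((E(2 := D * y, 4 := D))(0 := D * x)) (shifted_frac_fm \<phi>) \<longleftrightarrow>
      sat R [] env (frac_fm \<phi>)"
    by (auto simp: shifted_frac_fm_def env_def right_diff_distrib)
  also have "\<dots> \<longleftrightarrow> sat UNIV [R] (frac_env env) \<phi>"
    using E D by (intro sat_frac_fm[OF R]) (simp add: env_def)
  also have "frac_env env = (frac_env E)(0 := x - y)"
    using D by (auto simp: frac_env_def env_def)
  finally show ?thesis .
qed

lemma ict2_pattern_transfer_to_domain:
  fixes R :: "'a::field set"
  assumes R: "fraction_field_of R" and D: "D \<in> R" "D \<noteq> 0"
    and \<alpha>: "\<And>i. i < n \<Longrightarrow> D * \<alpha> i \<in> R" and \<beta>: "\<And>j. j < n \<Longrightarrow> D * \<beta> j \<in> R"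
    and rows: "\<And>i j k. i < n \<Longrightarrow> j < n \<Longrightarrow> k < n \<Longrightarrow> \<alpha> i + \<beta> j - \<alpha> k \<in> R \<longleftrightarrow> k = i"
    and columns: "\<And>i j l. i < n \<Longrightarrow> j < n \<Longrightarrow> l < n \<Longrightarrow>
      sat UNIV [R] (e(0 := \<alpha> i + \<beta> j - \<beta> l)) \<phi> \<longleftrightarrow> l = j"
  shows "ict2_pattern R [] dvd_diff_fm (shifted_frac_fm \<phi>) n"
proof -
  have S: "subring_of R"
    using R by (simp add: fraction_field_of_def)
  obtain E where E: "assignment_in R E" "\<forall>v. E (2 * v + 4) \<noteq> 0" "frac_env E = e"
    using frac_env_surj[OF R] by blast
  have witness: "D * (\<alpha> i + \<beta> j) \<in> R" if "i < n" "j < n" for i j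
    using \<alpha> \<beta> that subring_add[OF S] by (simp add: distrib_left)
  show ?thesis
    unfolding ict2_pattern_def
  proof (rule exI[of _ "\<lambda>k. (\<lambda>_. 0)(2 := D * \<alpha> k, 3 := D)"],
      rule exI[of _ "\<lambda>l. E(2 := D * \<beta> l, 4 := D)"],
      rule exI[of _ "\<lambda>i j. D * (\<alpha> i + \<beta> j)"], intro conjI allI impI)
    fix k assume "k < n"
    then show "assignment_in R ((\<lambda>_. 0)(2 := D * \<alpha> k, 3 := D))"
      and "assignment_in R (E(2 := D * \<beta> k, 4 := D))"
      using D \<alpha> \<beta> E(1) subring_zero[OF S] by (auto simp: assignment_in_def)
  next
    fix i j k assume ijk: "i < n" "j < n" "k < n"
    show "D * (\<alpha> i + \<beta> j) \<in> R"
      using ijk(1,2) by (rule witness)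
    show "sat R [] (((\<lambda>_. 0)(2 := D * \<alpha> k, 3 := D))(0 := D * (\<alpha> i + \<beta> j))) dvd_diff_fm
        \<longleftrightarrow> k = i"
      using sat_dvd_diff_fm[OF D(2)] rows[OF ijk] by simp
    show "sat R [] ((E(2 := D * \<beta> k, 4 := D))(0 := D * (\<alpha> i + \<beta> j))) (shifted_frac_fm \<phi>)
        \<longleftrightarrow> k = j"
      using sat_shifted_frac_fm[OF R E(2) D(2) witness \<beta>] columns[OF ijk] ijk
      unfolding E(3) by blast
  qed
qed

lemma dp_minimal_domain_imp_comparable:
  fixes R V :: "'a::field set"
  assumes R: "fraction_field_of R" and V: "valuation_ring V" and dp: "dp_minimal R []"
    and ext: "externally_definable UNIV [R] V"
  shows "R \<subseteq> V \<or> V \<subseteq> R"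
proof (rule ccontr)
  have S: "subring_of R"
    using R by (simp add: fraction_field_of_def)
  assume "\<not> (R \<subseteq> V \<or> V \<subseteq> R)"
  then obtain a b where ab: "a \<in> R" "a \<notin> V" "b \<in> V" "b \<notin> R"
    by blast
  obtain \<phi> where \<phi>: "\<forall>A. finite A \<and> A \<subseteq> UNIV \<longrightarrow>
      (\<exists>e. assignment_in UNIV e \<and> (\<forall>x\<in>A. x \<in> V \<longleftrightarrow> sat UNIV [R] (e(0 := x)) \<phi>))"
    using ext unfolding externally_definable_def by (elim conjE exE)
  obtain n where no_pattern: "\<not> ict2_pattern R [] dvd_diff_fm (shifted_frac_fm \<phi>) n"
    using dp unfolding dp_minimal_def by blast
  obtain \<alpha> where \<alpha>: "\<forall>i<n. \<alpha> i \<in> V" "pairwise_incongruent R n \<alpha>"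
    using pairwise_incongruent_exists[OF S V ab] by blast
  have "\<forall>j<n. a ^ j \<in> R"
    using subring_power[OF S ab(1)] by blast
  note grid = grid_membership[OF S valuation_ring_subring[OF V] \<alpha> this
      pairwise_incongruent_powers[OF V ab(2)]]
  obtain D where D: "D \<in> R" "D \<noteq> 0" "\<forall>x\<in>\<alpha> ` {..<n}. D * x \<in> R"
    using fraction_field_common_denominator[OF R finite_imageI[OF finite_lessThan]] by blast
  define A where "A = (\<lambda>(i, j, l). \<alpha> i + a ^ j - a ^ l) ` ({..<n} \<times> {..<n} \<times> {..<n})"
  have "finite A"
    by (simp add: A_def)
  then obtain e where e: "\<forall>x\<in>A. x \<in> V \<longleftrightarrow> sat UNIV [R] (e(0 := x)) \<phi>"
    using \<phi> by blast
  have "sat UNIV [R] (e(0 := \<alpha> i + a ^ j - a ^ l)) \<phi> \<longleftrightarrow> l = j"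
    if "i < n" "j < n" "l < n" for i j l
  proof -
    have "\<alpha> i + a ^ j - a ^ l \<in> A"
      unfolding A_def using that by force
    then show ?thesis
      using e grid(2)[OF that] by blast
  qed
  moreover have "D * a ^ j \<in> R" for j
    using subring_mult[OF S D(1) subring_power[OF S ab(1)]] .
  ultimately have "ict2_pattern R [] dvd_diff_fm (shifted_frac_fm \<phi>) n"
    using ict2_pattern_transfer_to_domain[OF R D(1,2), of n \<alpha> "\<lambda>j. a ^ j"] D(3) grid(1)
    by blast
  with no_pattern show False ..
qed

theorem mainTheorem19:
  fixes R Ov :: "'a::field set"
  assumes "fraction_field_of R" and "valuation_ring Ov"
  shows "(dp_minimal UNIV [R, Ov] \<longrightarrow> R \<subseteq> Ov \<or> Ov \<subseteq> R) \<and>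
         (dp_minimal R [] \<and> externally_definable UNIV [R] Ov \<longrightarrow> R \<subseteq> Ov \<or> Ov \<subseteq> R)"
proof -
  have "subring_of R"
    using assms(1) by (simp add: fraction_field_of_def)
  then show ?thesis
    using dp_minimal_imp_comparable dp_minimal_domain_imp_comparable assms by blast
qed

end
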